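(* Let $X$ be a centered Gaussian process, self-similar of order $\beta\in(0,1)$, satisfying (H.1) and (H.2) with parameters $\alpha,\lambda,\psi,c,\nu$. Let $q$ be a positive integer with $\alpha\le2-\frac1q$. Then for every $T>0$, $$\lim_{\varepsilon\to0}\varphi_{\alpha,q}(\varepsilon)\int_0^{T/\varepsilon}\int_0^{T/\varepsilon}\mathbf{1}_{D_2}(s,t)\,|\Phi(s,t)|^q\,ds\,dt=0,$$ where $D_2=\{(s,t)\in\mathbb{R}_+^2:|s-t|\ge(c-1)(s\wedge t)+c\}$.
   Context: Self-similar of order $\beta$: $(X(ct))_{t\ge0}\overset{law}{=}(c^\beta X(t))_{t\ge0}$ for all $c>0$. $\phi(x)=\mathbb{E}[X(1)X(x)]$, $x\ge1$, so $\mathbb{E}[X(s)X(t)]=s^{2\beta}\phi(t/s)$ for $0<s\le t$. (H.1): there is $\alpha\in(0,2\beta]$ with $\phi(x)=-\lambda(x-1)^\alpha+\psi(x)$, $\lambda>0$, $\psi$ twice differentiable on an open set containing $[1,\infty)$, and $C\ge0$ with, for $x\in(1,\infty)$: $|\psi'(x)|\le Cx^{\alpha-1}$, $|\psi''(x)|\le Cx^{-1}(x-1)^{\alpha-1}$, $\psi'(1)=\beta\psi(1)$ when $\alpha\ge1$. (H.2): there are $C>0$, $c>1$, $1<\nu\le2$ such that for $x\ge c$: $|\phi'(x)|\le Cx^{-\nu}$ if $\alpha<1$, $\le Cx^{\alpha-2}$ if $\alpha\ge1$; $|\phi''(x)|\le Cx^{-\nu-1}$ if $\alpha<1$, $\le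 Cx^{\alpha-3}$ if $\alpha\ge1$. Notation: $\Phi(s,t)=\mathbb{E}[Y_1(s)Y_1(t)]$ with $Y_1(u)=\frac{X(u+1)-X(u)}{\|X(u+1)-X(u)\|_{L^2(\Omega)}}$; $\varphi_{\alpha,q}(\varepsilon)=\varepsilon$ if $\alpha<2-1/q$ and $\varphi_{\alpha,q}(\varepsilon)=\varepsilon/|\log\varepsilon|$ if $\alpha=2-1/q$. *)

theory Defs
  imports "HOL-Probability.Probability"
begin

definition centered_gaussian_rv :: "'a measure \<Rightarrow> ('a \<Rightarrow> real) \<Rightarrow> bool" where
  "centered_gaussian_rv M Z \<longleftrightarrow> Z \<in> borel_measurable M \<and>
     ((AE \<omega> in M. Z \<omega> = 0) \<or> (\<exists>\<sigma>>0. distributed M lborel Z (normal_density 0 \<sigma>)))"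

definition centered_gaussian_process :: "'a measure \<Rightarrow> (real \<Rightarrow> 'a \<Rightarrow> real) \<Rightarrow> bool" where
  "centered_gaussian_process M X \<longleftrightarrow> prob_space M \<and>
     (\<forall>t\<ge>0. X t \<in> borel_measurable M) \<and>
     (\<forall>ts a :: real list. length a = length ts \<longrightarrow> set ts \<subseteq> {0..} \<longrightarrow>
        centered_gaussian_rv M (\<lambda>\<omega>. \<Sum>i<length ts. a ! i * X (ts ! i) \<omega>))"

definition self_similar :: "'a measure \<Rightarrow> (real \<Rightarrow> 'a \<Rightarrow> real) \<Rightarrow> real \<Rightarrow> bool" where
  "self_similar M X \<beta> \<longleftrightarrow> (\<forall>c>0::real.
     distr M (Pi\<^sub>M {0..} (\<lambda>_. borel)) (\<lambda>\<omega>. \<lambda>t\<in>{0..}. X (c * t) \<omega>) =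
     distr M (Pi\<^sub>M {0..} (\<lambda>_. borel)) (\<lambda>\<omega>. \<lambda>t\<in>{0..}. c powr \<beta> * X t \<omega>))"

definition cov_phi :: "'a measure \<Rightarrow> (real \<Rightarrow> 'a \<Rightarrow> real) \<Rightarrow> real \<Rightarrow> real" where
  "cov_phi M X x = (\<integral>\<omega>. X 1 \<omega> * X x \<omega> \<partial>M)"

definition Y1 :: "'a measure \<Rightarrow> (real \<Rightarrow> 'a \<Rightarrow> real) \<Rightarrow> real \<Rightarrow> 'a \<Rightarrow> real" where
  "Y1 M X u \<omega> = (X (u + 1) \<omega> - X u \<omega>) /
       sqrt (\<integral>\<eta>. (X (u + 1) \<eta> - X u \<eta>)\<^sup>2 \<partial>M)"

definition Phi :: "'a measure \<Rightarrow> (real \<Rightarrow> 'a \<Rightarrow> real) \<Rightarrow> real \<Rightarrow> real \<Rightarrow> real" where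
  "Phi M X s t = (\<integral>\<omega>. Y1 M X s \<omega> * Y1 M X t \<omega> \<partial>M)"

definition varphi_aq :: "real \<Rightarrow> nat \<Rightarrow> real \<Rightarrow> real" where
  "varphi_aq \<alpha> q \<epsilon> = (if \<alpha> < 2 - 1 / real q then \<epsilon> else \<epsilon> / \<bar>ln \<epsilon>\<bar>)"

definition H1 :: "'a measure \<Rightarrow> (real \<Rightarrow> 'a \<Rightarrow> real) \<Rightarrow> real \<Rightarrow> real \<Rightarrow> real \<Rightarrow> (real \<Rightarrow> real) \<Rightarrow> bool" where
  "H1 M X \<beta> \<alpha> lam \<psi> \<longleftrightarrow> 0 < \<alpha> \<and> \<alpha> \<le> 2 * \<beta> \<and> lam > 0 \<and>
     (\<forall>x\<ge>1. cov_phi M X x = - lam * (x - 1) powr \<alpha> + \<psi> x) \<and>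
     (\<exists>U. open U \<and> {1..} \<subseteq> U \<and>
        (\<forall>x\<in>U. \<psi> differentiable (at x) \<and> deriv \<psi> differentiable (at x))) \<and>
     (\<exists>C\<ge>0. \<forall>x>1. \<bar>deriv \<psi> x\<bar> \<le> C * x powr (\<alpha> - 1) \<and>
        \<bar>deriv (deriv \<psi>) x\<bar> \<le> C * x powr (-1) * (x - 1) powr (\<alpha> - 1)) \<and>
     (\<alpha> \<ge> 1 \<longrightarrow> deriv \<psi> 1 = \<beta> * \<psi> 1)"

definition H2 :: "'a measure \<Rightarrow> (real \<Rightarrow> 'a \<Rightarrow> real) \<Rightarrow> real \<Rightarrow> real \<Rightarrow> real \<Rightarrow> bool" where
  "H2 M X \<alpha> c \<nu> \<longleftrightarrow> c > 1 \<and> 1 < \<nu> \<and> \<nu> \<le> 2 \<and>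
     (\<exists>C>0. \<forall>x\<ge>c.
        (\<alpha> < 1 \<longrightarrow> \<bar>deriv (cov_phi M X) x\<bar> \<le> C * x powr (-\<nu>) \<and>
                   \<bar>deriv (deriv (cov_phi M X)) x\<bar> \<le> C * x powr (-\<nu> - 1)) \<and>
        (\<alpha> \<ge> 1 \<longrightarrow> \<bar>deriv (cov_phi M X) x\<bar> \<le> C * x powr (\<alpha> - 2) \<and>
                   \<bar>deriv (deriv (cov_phi M X)) x\<bar> \<le> C * x powr (\<alpha> - 3)))"

definition D2 :: "real \<Rightarrow> (real \<times> real) set" where
  "D2 c = {(s, t). s \<ge> 0 \<and> t \<ge> 0 \<and> \<bar>s - t\<bar> \<ge> (c - 1) * min s t + c}"

end

theory Submission
  imports Defs "HOL-Real_Asymp.Real_Asymp"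
begin

text \<open>
  By self-similarity E[X s X t] = s powr (2\<beta>) \<phi>(t/s), so the numerator of \<Phi>(s,t) is the rectangular
  increment over [s,s+1] \<times> [t,t+1] of the homogeneous function (u,v) \<mapsto> u powr (2\<beta>) \<phi>(v/u).
  On D2, say t \<ge> c(s+1), two mean value steps and the decay (H.2) of \<phi>' and \<phi>'' bound it by
  (s+1) powr (2\<beta>-2+m) (t+1) powr (-m), where m = \<nu> if \<alpha> < 1 and m = 2-\<alpha> otherwise.
  The normalising variances satisfy E (X(u+1) - X u)^2 \<ge> a (u+1) powr (2\<beta>-\<alpha>): for large u,
  self-similarity turns this into (1+h) powr (2\<beta>) \<phi>(1) - 2\<phi>(1+h) + \<phi>(1) = 2\<lambda> h powr \<alpha> + o(h powr \<alpha>)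
  with h = 1/u, which is what (H.1) gives; for small u, Cauchy-Schwarz and the concavity of u powr \<beta>
  suffice. Hence |\<Phi>|^q is bounded on D2 by K ((s+1)(t+1)) powr (-\<gamma>) with 1/2 \<le> \<gamma> < 1, and
  \<gamma> > 1/2 unless \<alpha> = 2 - 1/q. The integral over [0,T/\<epsilon>]^2 is then O(\<epsilon> powr (2\<gamma>-2)), which the
  factor \<epsilon> resp. \<epsilon>/|ln \<epsilon>| sends to 0; in the critical case \<gamma> = 1/2 only the logarithm helps.
\<close>

section \<open>Second moments of a self-similar Gaussian process\<close>

lemma abs_mult_le_sum_squares:
  fixes x y :: real
  shows "\<bar>x * y\<bar> \<le> x\<^sup>2 + y\<^sup>2"
proof -
  have "2 * \<bar>x\<bar> * \<bar>y\<bar> \<le> x\<^sup>2 + y\<^sup>2" using sum_squares_bound[of "\<bar>x\<bar>" "\<bar>y\<bar>"] by simp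
  moreover have "0 \<le> \<bar>x\<bar> * \<bar>y\<bar>" by simp
  ultimately show ?thesis unfolding abs_mult by linarith
qed

lemma quadratic_nonneg_imp_discriminant_le:
  fixes A B C :: real
  assumes nonneg: "\<And>r. 0 \<le> A + 2 * r * B + r\<^sup>2 * C" and "C \<ge> 0"
  shows "B\<^sup>2 \<le> A * C"
proof (cases "C = 0")
  case True
  have "B = 0"
  proof (rule ccontr)
    assume "B \<noteq> 0"
    have "0 \<le> A + 2 * (- (\<bar>A\<bar> + 1) / (2 * B)) * B"
      using nonneg[of "- (\<bar>A\<bar> + 1) / (2 * B)"] by (simp only: True mult_zero_right add_0_right)
    also have "\<dots> = A - (\<bar>A\<bar> + 1)" using \<open>B \<noteq> 0\<close> by simp
    finally show False by simp
  qed
  then show ?thesis using True by simp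
next
  case False
  with \<open>C \<ge> 0\<close> have "C > 0" by simp
  have "0 \<le> A + 2 * (- B / C) * B + (- B / C)\<^sup>2 * C" by (rule nonneg)
  also have "\<dots> = A - B\<^sup>2 / C" using \<open>C > 0\<close> by (simp add: field_simps power2_eq_square)
  finally show ?thesis using \<open>C > 0\<close> by (simp add: field_simps)
qed

lemma integrable_mult_of_square_integrable:
  fixes f g :: "'a \<Rightarrow> real"
  assumes [measurable]: "f \<in> borel_measurable M" "g \<in> borel_measurable M"
    and "integrable M (\<lambda>x. (f x)\<^sup>2)" "integrable M (\<lambda>x. (g x)\<^sup>2)"
  shows "integrable M (\<lambda>x. f x * g x)"
  by (rule Bochner_Integration.integrable_bound[where f = "\<lambda>x. (f x)\<^sup>2 + (g x)\<^sup>2"])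
    (use assms abs_mult_le_sum_squares in auto)

lemma integral_mult_Cauchy_Schwarz:
  fixes f g :: "'a \<Rightarrow> real"
  assumes [measurable]: "f \<in> borel_measurable M" "g \<in> borel_measurable M"
    and f2: "integrable M (\<lambda>x. (f x)\<^sup>2)" and g2: "integrable M (\<lambda>x. (g x)\<^sup>2)"
  shows "(\<integral>x. f x * g x \<partial>M)\<^sup>2 \<le> (\<integral>x. (f x)\<^sup>2 \<partial>M) * (\<integral>x. (g x)\<^sup>2 \<partial>M)"
proof (rule quadratic_nonneg_imp_discriminant_le)
  fix r :: real
  have fg: "integrable M (\<lambda>x. f x * g x)"
    using assms by (rule integrable_mult_of_square_integrable)
  have "0 \<le> (\<integral>x. (f x + r * g x)\<^sup>2 \<partial>M)" by simp
  also have "\<dots> = (\<integral>x. (f x)\<^sup>2 + 2 * r * (f x * g x) + r\<^sup>2 * (g x)\<^sup>2 \<partial>M)"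
    by (rule Bochner_Integration.integral_cong) (auto simp: power2_eq_square algebra_simps)
  also have "\<dots> = (\<integral>x. (f x)\<^sup>2 \<partial>M) + 2 * r * (\<integral>x. f x * g x \<partial>M) + r\<^sup>2 * (\<integral>x. (g x)\<^sup>2 \<partial>M)"
    using f2 g2 fg by simp
  finally show "0 \<le> (\<integral>x. (f x)\<^sup>2 \<partial>M) + 2 * r * (\<integral>x. f x * g x \<partial>M) + r\<^sup>2 * (\<integral>x. (g x)\<^sup>2 \<partial>M)" .
qed simp

definition homog :: "real \<Rightarrow> (real \<Rightarrow> real) \<Rightarrow> real \<Rightarrow> real \<Rightarrow> real" where
  "homog a g u v = u powr a * g (v / u)"

definition rect_diff :: "(real \<Rightarrow> real \<Rightarrow> real) \<Rightarrow> real \<Rightarrow> real \<Rightarrow> real" where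
  "rect_diff G s t = G (s + 1) (t + 1) - G (s + 1) t - G s (t + 1) + G s t"

locale ss_gaussian_process =
  fixes M :: "'a measure" and X :: "real \<Rightarrow> 'a \<Rightarrow> real" and \<beta> :: real
  assumes gaussian: "centered_gaussian_process M X"
    and self_similar: "self_similar M X \<beta>"
    and \<beta>_pos: "0 < \<beta>"
begin

lemma X_measurable [measurable]: "t \<ge> 0 \<Longrightarrow> X t \<in> borel_measurable M"
  using gaussian unfolding centered_gaussian_process_def by auto

lemma centered_gaussian_rv_X:
  assumes "t \<ge> 0" shows "centered_gaussian_rv M (X t)"
proof -
  have "\<forall>ts a :: real list. length a = length ts \<longrightarrow> set ts \<subseteq> {0..} \<longrightarrow>
      centered_gaussian_rv M (\<lambda>\<omega>. \<Sum>i<length ts. a ! i * X (ts ! i) \<omega>)"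
    using gaussian unfolding centered_gaussian_process_def by blast
  from this[rule_format, of "[1]" "[t]"] show ?thesis using assms by simp
qed

lemma square_integrable_X: "t \<ge> 0 \<Longrightarrow> integrable M (\<lambda>x. (X t x)\<^sup>2)"
proof -
  assume "t \<ge> 0"
  consider "AE x in M. X t x = 0" | \<sigma> where "\<sigma> > 0" "distributed M lborel (X t) (normal_density 0 \<sigma>)"
    using centered_gaussian_rv_X[OF \<open>t \<ge> 0\<close>] unfolding centered_gaussian_rv_def by blast
  then show ?thesis
  proof cases
    case 1
    then have "AE x in M. 0 = (X t x)\<^sup>2" by auto
    then show ?thesis using \<open>t \<ge> 0\<close> by (subst integrable_cong_AE[where g = "\<lambda>_. 0"]) auto
  next
    case 2
    have "integrable lborel (\<lambda>x. normal_density 0 \<sigma> x * x\<^sup>2)"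
      using integrable_normal_moment[where k = 2 and \<mu> = 0 and \<sigma> = \<sigma>] 2 by simp
    then show ?thesis using distributed_integrable[OF 2(2), of "\<lambda>x. x\<^sup>2"] by simp
  qed
qed

definition cov :: "real \<Rightarrow> real \<Rightarrow> real" where
  "cov a b = (\<integral>x. X a x * X b x \<partial>M)"

lemma integrable_X_mult: "a \<ge> 0 \<Longrightarrow> b \<ge> 0 \<Longrightarrow> integrable M (\<lambda>x. X a x * X b x)"
  by (rule integrable_mult_of_square_integrable) (auto intro: square_integrable_X)

lemma cov_Cauchy_Schwarz: "a \<ge> 0 \<Longrightarrow> b \<ge> 0 \<Longrightarrow> (cov a b)\<^sup>2 \<le> cov a a * cov b b"
  unfolding cov_def using integral_mult_Cauchy_Schwarz[of "X a" M "X b"] square_integrable_X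
  by (simp add: power2_eq_square)

lemma cov_diag_nonneg: "cov a a \<ge> 0"
  unfolding cov_def by simp

lemma cov_scale:
  assumes "c > 0" "a \<ge> 0" "b \<ge> 0"
  shows "cov (c * a) (c * b) = c powr (2 * \<beta>) * cov a b"
proof -
  let ?P = "Pi\<^sub>M {0::real..} (\<lambda>_. borel :: real measure)"
  have law: "distr M ?P (\<lambda>x. \<lambda>t\<in>{0..}. X (c * t) x) = distr M ?P (\<lambda>x. \<lambda>t\<in>{0..}. c powr \<beta> * X t x)"
    using self_similar \<open>c > 0\<close> unfolding self_similar_def by auto
  have m1: "(\<lambda>x. \<lambda>t\<in>{0::real..}. X (c * t) x) \<in> measurable M ?P"
    by (rule measurable_restrict) (use \<open>c > 0\<close> in \<open>auto intro!: X_measurable\<close>)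
  have m2: "(\<lambda>x. \<lambda>t\<in>{0::real..}. c powr \<beta> * X t x) \<in> measurable M ?P"
    by (rule measurable_restrict) (auto intro!: X_measurable)
  have eval: "(\<lambda>f. f a * f b) \<in> borel_measurable ?P"
    using assms by (intro borel_measurable_times measurable_component_singleton) auto
  have "(\<integral>x. X (c * a) x * X (c * b) x \<partial>M) = (\<integral>x. (c powr \<beta> * X a x) * (c powr \<beta> * X b x) \<partial>M)"
    using arg_cong[OF law, of "\<lambda>N. integral\<^sup>L N (\<lambda>f. f a * f b)"] assms
    by (simp add: integral_distr[OF m1 eval] integral_distr[OF m2 eval])
  also have "\<dots> = (\<integral>x. c powr (2 * \<beta>) * (X a x * X b x) \<partial>M)"
    by (rule Bochner_Integration.integral_cong) (simp_all add: powr_add[symmetric] mult_ac)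
  finally show ?thesis unfolding cov_def by simp
qed

lemma cov_zero_left: "b \<ge> 0 \<Longrightarrow> cov 0 b = 0"
proof -
  assume "b \<ge> 0"
  have "cov (2 * 0) (2 * 0) = 2 powr (2 * \<beta>) * cov 0 0" by (rule cov_scale) auto
  moreover have "2 powr (2 * \<beta>) \<noteq> (1::real)" using \<beta>_pos by simp
  ultimately have "cov 0 0 = 0" by simp
  then show ?thesis using cov_Cauchy_Schwarz[of 0 b] \<open>b \<ge> 0\<close> by simp
qed

lemma cov_eq_homog:
  assumes "a \<ge> 0" "b \<ge> 0"
  shows "cov a b = homog (2 * \<beta>) (cov_phi M X) a b"
proof (cases "a = 0")
  case True
  then show ?thesis using cov_zero_left assms unfolding homog_def by simp
next
  case False
  then have "cov (a * 1) (a * (b / a)) = a powr (2 * \<beta>) * cov 1 (b / a)"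
    using assms by (intro cov_scale) auto
  then show ?thesis using False unfolding cov_phi_def cov_def homog_def by simp
qed

definition incr_var :: "real \<Rightarrow> real" where
  "incr_var u = (\<integral>x. (X (u + 1) x - X u x)\<^sup>2 \<partial>M)"

lemma incr_var_nonneg: "incr_var u \<ge> 0"
  unfolding incr_var_def by simp

lemma incr_var_eq_cov:
  assumes "u \<ge> 0"
  shows "incr_var u = cov (u + 1) (u + 1) - 2 * cov u (u + 1) + cov u u"
proof -
  have "incr_var u = (\<integral>x. X (u + 1) x * X (u + 1) x - 2 * (X u x * X (u + 1) x) + X u x * X u x \<partial>M)"
    unfolding incr_var_def
    by (rule Bochner_Integration.integral_cong) (auto simp: power2_eq_square algebra_simps)
  then show ?thesis unfolding cov_def using assms by (simp add: integrable_X_mult)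
qed

lemma incr_var_ge_sqrt_diff:
  assumes "u \<ge> 0"
  shows "incr_var u \<ge> (sqrt (cov (u + 1) (u + 1)) - sqrt (cov u u))\<^sup>2"
proof -
  have "(cov u (u + 1))\<^sup>2 \<le> cov u u * cov (u + 1) (u + 1)"
    using cov_Cauchy_Schwarz assms by simp
  then have "cov u (u + 1) \<le> sqrt (cov u u) * sqrt (cov (u + 1) (u + 1))"
    by (metis real_sqrt_mult abs_le_D1 real_sqrt_abs real_sqrt_le_mono)
  then show ?thesis
    using incr_var_eq_cov[OF assms] cov_diag_nonneg by (simp add: power2_eq_square algebra_simps)
qed

lemma Phi_eq_rect_diff_cov:
  assumes "s \<ge> 0" "t \<ge> 0"
  shows "Phi M X s t = rect_diff cov s t / (sqrt (incr_var s) * sqrt (incr_var t))"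
proof -
  have "Phi M X s t = (\<integral>x. (X (s + 1) x - X s x) * (X (t + 1) x - X t x) \<partial>M) / (sqrt (incr_var s) * sqrt (incr_var t))"
    unfolding Phi_def Y1_def incr_var_def by simp
  also have "(\<integral>x. (X (s + 1) x - X s x) * (X (t + 1) x - X t x) \<partial>M) =
      (\<integral>x. X (s + 1) x * X (t + 1) x - X (s + 1) x * X t x - X s x * X (t + 1) x + X s x * X t x \<partial>M)"
    by (rule Bochner_Integration.integral_cong) (auto simp: algebra_simps)
  also have "\<dots> = rect_diff cov s t"
    unfolding rect_diff_def cov_def using assms by (simp add: integrable_X_mult)
  finally show ?thesis .
qed

end

lemma Phi_commute: "Phi M X s t = Phi M X t s"
  unfolding Phi_def by (simp add: mult.commute)

section \<open>Rectangular increments of homogeneous functions\<close>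

lemma powr_le_two_powr_abs_mult_powr:
  fixes x y p :: real
  assumes "0 < y" "x \<le> 2 * y" "y \<le> x"
  shows "y powr p \<le> 2 powr \<bar>p\<bar> * x powr p"
proof (cases "p \<ge> 0")
  case True
  have "y powr p \<le> x powr p" using assms True by (intro powr_mono2) auto
  also have "\<dots> \<le> 2 powr \<bar>p\<bar> * x powr p"
    using ge_one_powr_ge_zero[of 2 "\<bar>p\<bar>"] by (simp add: mult_le_cancel_right1)
  finally show ?thesis .
next
  case False
  have "y powr p \<le> (x / 2) powr p" using assms False by (intro powr_mono2') auto
  also have "\<dots> = 2 powr \<bar>p\<bar> * x powr p"
    using assms False by (simp add: powr_divide abs_of_neg powr_minus_divide)
  finally show ?thesis .
qed

lemma powr_mult_div_powr_uminus:
  fixes u v p m :: real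
  assumes "u > 0" "v > 0"
  shows "u powr p * (v / u) powr (- m) = u powr (p + m) * v powr (- m)"
  using assms by (simp add: powr_divide powr_minus_divide powr_add field_simps)

lemma powr_le_powr_mult_powr:
  fixes h d a e :: real
  assumes "0 < h" "h \<le> 1" "d + a \<le> e"
  shows "h powr e \<le> h powr d * h powr a"
proof -
  have "h powr e \<le> h powr (d + a)" using assms by (intro powr_mono') auto
  then show ?thesis by (simp add: powr_add)
qed

lemma homog_has_derivative_right:
  assumes "u > 0" "(g has_real_derivative g') (at (v / u))"
  shows "(homog a g u has_real_derivative u powr (a - 1) * g') (at v)"
proof -
  have "((\<lambda>w. g (w / u)) has_real_derivative g' * (1 / u)) (at v)"
    using assms(2) DERIV_cdivide[OF DERIV_ident] by (rule DERIV_chain2)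
  then have "(homog a g u has_real_derivative u powr a * (g' * (1 / u))) (at v)"
    unfolding homog_def by (rule DERIV_cmult)
  then show ?thesis using assms(1) by (simp add: powr_diff)
qed

lemma homog_has_derivative_left:
  assumes "u > 0" "(g has_real_derivative g') (at (v / u))"
  shows "((\<lambda>w. homog a g w v) has_real_derivative
      a * u powr (a - 1) * g (v / u) - v * u powr (a - 2) * g') (at u)"
proof -
  have "((\<lambda>w. v / w) has_real_derivative - v / u\<^sup>2) (at u)"
    using assms(1) by (auto intro!: derivative_eq_intros simp: power2_eq_square field_simps)
  with assms(2) have "((\<lambda>w. g (v / w)) has_real_derivative g' * (- v / u\<^sup>2)) (at u)"
    by (rule DERIV_chain2)
  from DERIV_mult[OF has_real_derivative_powr[OF assms(1), of a] this]
  show ?thesis using assms(1) unfolding homog_def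
    by (simp add: powr_diff power2_eq_square field_simps)
qed

locale derivative_decay =
  fixes g g' g'' :: "real \<Rightarrow> real" and c C m :: real
  assumes c_gt_1: "c > 1" and C_nonneg: "C \<ge> 0" and m_nonneg: "m \<ge> 0"
    and has_deriv: "\<And>x. x \<ge> c \<Longrightarrow> (g has_real_derivative g' x) (at x)"
    and has_deriv2: "\<And>x. x \<ge> c \<Longrightarrow> (g' has_real_derivative g'' x) (at x)"
    and deriv_bound: "\<And>x. x \<ge> c \<Longrightarrow> \<bar>g' x\<bar> \<le> C * x powr (- m)"
    and deriv2_bound: "\<And>x. x \<ge> c \<Longrightarrow> \<bar>g'' x\<bar> \<le> C * x powr (- m - 1)"
begin

lemma homog_increment_bound:
  assumes "u > 0" "t \<ge> c * u"
  shows "\<bar>homog a g u (t + 1) - homog a g u t\<bar> \<le> C * u powr (a - 1 + m) * t powr (- m)"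
proof -
  have t_pos: "t > 0" using assms c_gt_1 by (smt (verit) mult_pos_pos)
  have "(homog a g u has_real_derivative u powr (a - 1) * g' (v / u)) (at v)" if "t \<le> v" for v
    using assms that by (intro homog_has_derivative_right has_deriv) (auto simp: field_simps)
  then obtain z where z: "t < z" "z < t + 1"
    and eq: "homog a g u (t + 1) - homog a g u t = u powr (a - 1) * g' (z / u)"
    using MVT2[of t "t + 1" "homog a g u" "\<lambda>v. u powr (a - 1) * g' (v / u)"] by auto
  have "z / u \<ge> c" using assms z by (simp add: field_simps)
  then have "\<bar>homog a g u (t + 1) - homog a g u t\<bar> \<le> u powr (a - 1) * (C * (z / u) powr (- m))"
    unfolding eq abs_mult by (simp add: deriv_bound mult_left_mono)
  also have "\<dots> = C * u powr (a - 1 + m) * z powr (- m)"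
    using powr_mult_div_powr_uminus[of u z "a - 1" m] assms z t_pos by simp
  also have "\<dots> \<le> C * u powr (a - 1 + m) * t powr (- m)"
    using z t_pos m_nonneg C_nonneg by (intro mult_left_mono powr_mono2') auto
  finally show ?thesis .
qed

lemma mixed_derivative_homog_bound:
  assumes "\<xi> > 0" "\<eta> / \<xi> \<ge> c"
  shows "\<bar>(a - 1) * \<xi> powr (a - 2) * g' (\<eta> / \<xi>) - \<eta> * \<xi> powr (a - 3) * g'' (\<eta> / \<xi>)\<bar>
    \<le> (\<bar>a - 1\<bar> + 1) * C * \<xi> powr (a - 2 + m) * \<eta> powr (- m)"
proof -
  have "c * \<xi> \<le> \<eta>" using assms by (simp add: field_simps)
  moreover have "0 < c * \<xi>" using assms c_gt_1 by simp
  ultimately have "\<eta> > 0" by linarith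
  have "\<bar>(a - 1) * \<xi> powr (a - 2) * g' (\<eta> / \<xi>) - \<eta> * \<xi> powr (a - 3) * g'' (\<eta> / \<xi>)\<bar>
      \<le> \<bar>a - 1\<bar> * \<xi> powr (a - 2) * \<bar>g' (\<eta> / \<xi>)\<bar> + \<eta> * \<xi> powr (a - 3) * \<bar>g'' (\<eta> / \<xi>)\<bar>"
    using \<open>\<eta> > 0\<close> by (auto simp: abs_mult intro!: order.trans[OF abs_triangle_ineq4])
  also have "\<dots> \<le> \<bar>a - 1\<bar> * \<xi> powr (a - 2) * (C * (\<eta> / \<xi>) powr (- m))
      + \<eta> * \<xi> powr (a - 3) * (C * (\<eta> / \<xi>) powr (- m - 1))"
    using assms \<open>\<eta> > 0\<close> by (intro add_mono mult_left_mono deriv_bound deriv2_bound) auto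
  also have "\<dots> = (\<bar>a - 1\<bar> + 1) * C * \<xi> powr (a - 2 + m) * \<eta> powr (- m)"
  proof -
    have "\<eta> * \<xi> powr (a - 3) * (\<eta> / \<xi>) powr (- m - 1) = \<xi> powr (a - 2) * (\<eta> / \<xi>) powr (- m)"
      using assms \<open>\<eta> > 0\<close> by (simp add: powr_diff powr_minus field_simps power3_eq_cube power2_eq_square)
    then show ?thesis using powr_mult_div_powr_uminus[of \<xi> \<eta> "a - 2" m] assms \<open>\<eta> > 0\<close>
      by (simp add: algebra_simps)
  qed
  finally show ?thesis .
qed

lemma rect_diff_homog_mvt_bound:
  assumes s: "s > 0" and t: "t \<ge> c * (s + 1)"
  obtains \<xi> where "s < \<xi>" "\<xi> < s + 1"
    "\<bar>rect_diff (homog a g) s t\<bar> \<le> (\<bar>a - 1\<bar> + 1) * C * \<xi> powr (a - 2 + m) * t powr (- m)"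
proof -
  define H where "H v = homog a g (s + 1) v - homog a g s v" for v
  define K where "K u \<eta> = homog (a - 1) g' u \<eta>" for u \<eta>
  have "(H has_real_derivative K (s + 1) v - K s v) (at v)" if "t \<le> v" for v
  proof -
    have "c * s \<le> v" "c * (s + 1) \<le> v" using that t c_gt_1 by (simp_all add: field_simps)
    then show ?thesis unfolding H_def[abs_def] K_def homog_def
      using s by (intro DERIV_diff homog_has_derivative_right[unfolded homog_def] has_deriv)
        (auto simp: field_simps)
  qed
  then obtain \<eta> where \<eta>: "t < \<eta>" "\<eta> < t + 1" "H (t + 1) - H t = K (s + 1) \<eta> - K s \<eta>"
    using MVT2[of t "t + 1" H] by fastforce
  define K' where "K' u = (a - 1) * u powr (a - 2) * g' (\<eta> / u) - \<eta> * u powr (a - 3) * g'' (\<eta> / u)" for u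
  have \<eta>_ge: "\<eta> / u \<ge> c" if "0 < u" "u \<le> s + 1" for u
  proof -
    have "c * u \<le> c * (s + 1)" using that c_gt_1 by simp
    then have "c * u \<le> \<eta>" using t \<eta> by linarith
    then show ?thesis using that by (simp add: field_simps)
  qed
  have "((\<lambda>u. K u \<eta>) has_real_derivative K' u) (at u)" if "s \<le> u" "u \<le> s + 1" for u
    using homog_has_derivative_left[OF _ has_deriv2[OF \<eta>_ge], of u "a - 1"] s that
    unfolding K_def K'_def by (simp add: algebra_simps)
  then obtain \<xi> where \<xi>: "s < \<xi>" "\<xi> < s + 1" "K (s + 1) \<eta> - K s \<eta> = K' \<xi>"
    using MVT2[of s "s + 1" "\<lambda>u. K u \<eta>" K'] by fastforce
  have "c * (s + 1) > 0" using s c_gt_1 by simp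
  then have pos: "\<xi> > 0" "t > 0" using \<xi> s t by linarith+
  have "\<bar>K' \<xi>\<bar> \<le> (\<bar>a - 1\<bar> + 1) * C * \<xi> powr (a - 2 + m) * \<eta> powr (- m)"
    unfolding K'_def using \<xi> pos by (intro mixed_derivative_homog_bound \<eta>_ge) auto
  also have "\<dots> \<le> (\<bar>a - 1\<bar> + 1) * C * \<xi> powr (a - 2 + m) * t powr (- m)"
    using pos \<eta> C_nonneg m_nonneg by (intro mult_left_mono powr_mono2') auto
  finally show ?thesis
    using that \<xi> \<eta>(3) \<xi>(3) unfolding rect_diff_def H_def K_def by (simp add: algebra_simps)
qed

text \<open>Near \<open>s = 0\<close> the factor \<open>\<xi> powr (a - 2 + m)\<close> of the mean value bound may blow up, so there
  the two increments in \<open>t\<close> are estimated separately.\<close>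

lemma rect_diff_homog_bound_near_zero:
  assumes a: "a - 1 + m \<ge> 0" and s: "0 \<le> s" "s < 1" and t: "t \<ge> c * (s + 1)"
  shows "\<bar>rect_diff (homog a g) s t\<bar> \<le> C * (2 powr (a - 1 + m) + 1) * t powr (- m)"
proof -
  have "\<bar>homog a g (s + 1) (t + 1) - homog a g (s + 1) t\<bar> \<le> C * (s + 1) powr (a - 1 + m) * t powr (- m)"
    using s t by (intro homog_increment_bound) auto
  also have "\<dots> \<le> C * 2 powr (a - 1 + m) * t powr (- m)"
    using s a C_nonneg by (intro mult_right_mono mult_left_mono powr_mono2) auto
  finally have D1: "\<bar>homog a g (s + 1) (t + 1) - homog a g (s + 1) t\<bar> \<le> C * 2 powr (a - 1 + m) * t powr (- m)" .
  have D0: "\<bar>homog a g s (t + 1) - homog a g s t\<bar> \<le> C * t powr (- m)"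
  proof (cases "s = 0")
    case True
    then show ?thesis using C_nonneg by (simp add: homog_def)
  next
    case False
    have "c * s \<le> t" using t s c_gt_1 by (smt (verit) mult_left_mono)
    then have "\<bar>homog a g s (t + 1) - homog a g s t\<bar> \<le> C * s powr (a - 1 + m) * t powr (- m)"
      using s False by (intro homog_increment_bound) auto
    also have "\<dots> \<le> C * 1 * t powr (- m)"
      using s a C_nonneg by (intro mult_right_mono mult_left_mono powr_le1) auto
    finally show ?thesis by simp
  qed
  show ?thesis using D1 D0 unfolding rect_diff_def by (simp add: algebra_simps)
qed

lemma rect_diff_homog_bound_powr_t:
  assumes a: "a - 1 + m \<ge> 0" and s: "s \<ge> 0" and t: "t \<ge> c * (s + 1)"
  shows "\<bar>rect_diff (homog a g) s t\<bar>
    \<le> (\<bar>a - 1\<bar> + 2 powr (a - 1 + m) + 2) * C * (2 powr \<bar>a - 2 + m\<bar> * (s + 1) powr (a - 2 + m)) * t powr (- m)"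
    (is "_ \<le> ?K0 * ?S * _")
proof (cases "s \<ge> 1")
  case True
  obtain \<xi> where \<xi>: "s < \<xi>" "\<xi> < s + 1"
    and bound: "\<bar>rect_diff (homog a g) s t\<bar> \<le> (\<bar>a - 1\<bar> + 1) * C * \<xi> powr (a - 2 + m) * t powr (- m)"
    using rect_diff_homog_mvt_bound[of s t a] True t by auto
  have "\<xi> powr (a - 2 + m) \<le> ?S" using \<xi> True by (intro powr_le_two_powr_abs_mult_powr) auto
  moreover have "(\<bar>a - 1\<bar> + 1) * C \<le> ?K0" using C_nonneg by (intro mult_right_mono) auto
  ultimately show ?thesis
    using bound C_nonneg by (smt (verit) mult_mono mult_right_mono powr_ge_zero zero_le_mult_iff)
next
  case False
  have "1 \<le> ?S" using powr_le_two_powr_abs_mult_powr[of 1 "s + 1" "a - 2 + m"] False s by simp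
  have "?K0 \<ge> 0" using C_nonneg by simp
  have "\<bar>rect_diff (homog a g) s t\<bar> \<le> C * (2 powr (a - 1 + m) + 1) * t powr (- m)"
    using rect_diff_homog_bound_near_zero a s t False by simp
  also have "\<dots> \<le> ?K0 * t powr (- m)"
    using C_nonneg by (intro mult_right_mono) (auto simp: algebra_simps)
  also have "\<dots> \<le> ?K0 * ?S * t powr (- m)"
    using \<open>1 \<le> ?S\<close> \<open>?K0 \<ge> 0\<close> by (intro mult_right_mono) (auto simp: mult_le_cancel_left1)
  finally show ?thesis .
qed

lemma rect_diff_homog_bound:
  assumes "a - 1 + m \<ge> 0"
  obtains K where "\<And>s t. s \<ge> 0 \<Longrightarrow> t \<ge> c * (s + 1) \<Longrightarrow>
    \<bar>rect_diff (homog a g) s t\<bar> \<le> K * (s + 1) powr (a - 2 + m) * (t + 1) powr (- m)"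
proof
  fix s t :: real
  assume s: "s \<ge> 0" and t: "t \<ge> c * (s + 1)"
  let ?K0 = "(\<bar>a - 1\<bar> + 2 powr (a - 1 + m) + 2) * C"
  have "1 \<le> c * (s + 1)" using s c_gt_1 mult_mono[of 1 c 1 "s + 1"] by simp
  then have "t powr (- m) \<le> 2 powr m * (t + 1) powr (- m)"
    using t m_nonneg powr_le_two_powr_abs_mult_powr[of t "t + 1" "- m"] by simp
  then have "?K0 * (2 powr \<bar>a - 2 + m\<bar> * (s + 1) powr (a - 2 + m)) * t powr (- m)
      \<le> ?K0 * (2 powr \<bar>a - 2 + m\<bar> * (s + 1) powr (a - 2 + m)) * (2 powr m * (t + 1) powr (- m))"
    using C_nonneg by (intro mult_left_mono) auto
  with rect_diff_homog_bound_powr_t[OF assms s t]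
  show "\<bar>rect_diff (homog a g) s t\<bar>
      \<le> ?K0 * 2 powr \<bar>a - 2 + m\<bar> * 2 powr m * (s + 1) powr (a - 2 + m) * (t + 1) powr (- m)"
    by (simp add: mult_ac)
qed

end

lemma second_order_mean_value:
  fixes F F' F'' :: "real \<Rightarrow> real"
  assumes "a < b"
    and "\<And>x. a \<le> x \<Longrightarrow> x \<le> b \<Longrightarrow> (F has_real_derivative F' x) (at x)"
    and "\<And>x. a \<le> x \<Longrightarrow> x \<le> b \<Longrightarrow> (F' has_real_derivative F'' x) (at x)"
  obtains z1 z2 where "a < z2" "z2 < z1" "z1 < b" "F b - F a - F' a * (b - a) = (b - a) * (z1 - a) * F'' z2"
proof -
  obtain z1 where z1: "a < z1" "z1 < b" "F b - F a = (b - a) * F' z1"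
    using MVT2[of a b F F'] assms by auto
  obtain z2 where z2: "a < z2" "z2 < z1" "F' z1 - F' a = (z1 - a) * F'' z2"
    using MVT2[of a z1 F' F''] z1 assms by auto
  have "F b - F a - F' a * (b - a) = (b - a) * (F' z1 - F' a)" using z1(3) by (simp add: algebra_simps)
  with that z1 z2 show ?thesis by simp
qed

lemma one_plus_powr_taylor_bound:
  fixes e h :: real
  assumes "0 < e" "e \<le> 2" "0 < h" "h \<le> 1"
  shows "\<bar>(1 + h) powr e - 1 - e * h\<bar> \<le> 2 * h\<^sup>2"
proof -
  have d1: "((\<lambda>x. x powr e) has_real_derivative e * x powr (e - 1)) (at x)" if "1 \<le> x" for x
    using that by (intro has_real_derivative_powr) auto
  have d2: "((\<lambda>x. e * x powr (e - 1)) has_real_derivative e * ((e - 1) * x powr (e - 2))) (at x)"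
    if "1 \<le> x" for x
    using DERIV_cmult[OF has_real_derivative_powr[of x "e - 1"], of e] that by simp
  obtain z1 z2 where z: "1 < z2" "z2 < z1" "z1 < 1 + h"
    and eq: "(1 + h) powr e - 1 - e * h = h * (z1 - 1) * (e * ((e - 1) * z2 powr (e - 2)))"
    by (rule second_order_mean_value[of 1 "1 + h", OF _ d1 d2]) (use assms in auto)
  have "z2 powr (e - 2) \<le> z2 powr 0" using z assms by (intro powr_mono) auto
  then have "\<bar>e * ((e - 1) * z2 powr (e - 2))\<bar> \<le> 2 * (1 * 1)"
    unfolding abs_mult using assms z by (intro mult_mono) auto
  then have "h * (z1 - 1) * \<bar>e * ((e - 1) * z2 powr (e - 2))\<bar> \<le> h * h * 2"
    using assms z by (intro mult_mono) auto
  then show ?thesis unfolding eq using assms z by (simp add: abs_mult power2_eq_square)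
qed

lemma one_plus_powr_sub_one_bound:
  fixes e h :: real
  assumes "0 < e" "e \<le> 2" "0 < h" "h \<le> 1"
  shows "\<bar>(1 + h) powr e - 1\<bar> \<le> 4 * h"
proof -
  have "\<bar>(1 + h) powr e - 1 - e * h\<bar> \<le> 2 * h\<^sup>2"
    using assms by (rule one_plus_powr_taylor_bound)
  moreover have "h\<^sup>2 \<le> h" using assms by (simp add: power2_eq_square mult_le_cancel_left2)
  moreover have "e * h \<le> 2 * h" using assms by (intro mult_right_mono) auto
  moreover have "0 \<le> e * h" using assms by simp
  ultimately show ?thesis by linarith
qed

lemma powr_increment_ge:
  fixes u e :: real
  assumes "u \<ge> 0" "0 < e" "e < 1"
  shows "(u + 1) powr e - u powr e \<ge> e * (u + 1) powr (e - 1)"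
proof -
  have "continuous_on {u..u + 1} (\<lambda>x. x powr e)"
    using assms by (intro continuous_on_powr' continuous_intros) auto
  moreover have "(\<lambda>x. x powr e) differentiable (at x)" if "u < x" for x
    using has_real_derivative_powr[of x e] that assms real_differentiable_def by force
  ultimately obtain l z where z: "u < z" "z < u + 1" "((\<lambda>x. x powr e) has_real_derivative l) (at z)"
    and eq: "(u + 1) powr e - u powr e = (u + 1 - u) * l"
    using MVT[of u "u + 1" "\<lambda>x. x powr e"] by auto
  have "l = e * z powr (e - 1)"
    using DERIV_unique[OF z(3) has_real_derivative_powr[of z e]] z assms by simp
  moreover have "z powr (e - 1) \<ge> (u + 1) powr (e - 1)" using z assms by (intro powr_mono2') auto
  ultimately show ?thesis using eq assms by simp
qed

lemma mem_D2_imp: "(s, t) \<in> D2 c \<Longrightarrow> t \<ge> c * (s + 1) \<or> s \<ge> c * (t + 1)"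
  unfolding D2_def by (cases "s \<le> t") (auto simp: min_def algebra_simps)

lemma powr_mult_powr_le_diag:
  fixes x y a b \<gamma> :: real
  assumes "1 \<le> x" "x \<le> y" "a - b \<le> - 2 * \<gamma>" "2 * \<gamma> \<le> b" "\<gamma> \<ge> 0"
  shows "x powr a * y powr (- b) \<le> x powr (- \<gamma>) * y powr (- \<gamma>)"
proof -
  have "x powr a * y powr (- b) \<le> y powr (- 2 * \<gamma>)"
  proof (cases "a \<ge> 0")
    case True
    have "x powr a * y powr (- b) \<le> y powr a * y powr (- b)"
      using assms True by (intro mult_right_mono powr_mono2) auto
    also have "\<dots> \<le> y powr (- 2 * \<gamma>)"
      using assms by (simp add: powr_add[symmetric] powr_mono)
    finally show ?thesis .
  next
    case False
    have "x powr a \<le> 1" using assms False powr_mono[of a 0 x] by simp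
    then have "x powr a * y powr (- b) \<le> y powr (- b)" by (simp add: mult_left_le_one_le)
    also have "\<dots> \<le> y powr (- 2 * \<gamma>)" using assms by (simp add: powr_mono)
    finally show ?thesis .
  qed
  also have "\<dots> = y powr (- \<gamma>) * y powr (- \<gamma>)" by (simp add: powr_add[symmetric])
  also have "\<dots> \<le> x powr (- \<gamma>) * y powr (- \<gamma>)"
    using assms by (intro mult_right_mono powr_mono2') auto
  finally show ?thesis .
qed

section \<open>Variance of the increments\<close>

locale regular_ss_gaussian_process = ss_gaussian_process +
  fixes \<alpha> lam c \<nu> :: real and \<psi> :: "real \<Rightarrow> real"
  assumes \<beta>_lt_1: "\<beta> < 1" and H1: "H1 M X \<beta> \<alpha> lam \<psi>" and H2: "H2 M X \<alpha> c \<nu>"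
begin

abbreviation phi :: "real \<Rightarrow> real" where
  "phi \<equiv> cov_phi M X"

lemma \<alpha>_pos: "0 < \<alpha>" and \<alpha>_le_2\<beta>: "\<alpha> \<le> 2 * \<beta>" and lam_pos: "0 < lam"
  and phi_eq: "x \<ge> 1 \<Longrightarrow> phi x = - lam * (x - 1) powr \<alpha> + \<psi> x"
  and psi_deriv_one: "\<alpha> \<ge> 1 \<Longrightarrow> deriv \<psi> 1 = \<beta> * \<psi> 1"
  using H1 unfolding H1_def by auto

lemma \<alpha>_lt_2: "\<alpha> < 2"
  using \<alpha>_le_2\<beta> \<beta>_lt_1 by simp

lemma psi_has_deriv:
  assumes "x \<ge> 1"
  shows "(\<psi> has_real_derivative deriv \<psi> x) (at x)"
    and "(deriv \<psi> has_real_derivative deriv (deriv \<psi>) x) (at x)"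
proof -
  obtain U where "open U" "{1..} \<subseteq> U"
    and "\<And>x. x \<in> U \<Longrightarrow> \<psi> differentiable (at x) \<and> deriv \<psi> differentiable (at x)"
    using H1 unfolding H1_def by blast
  with assms show "(\<psi> has_real_derivative deriv \<psi> x) (at x)"
    and "(deriv \<psi> has_real_derivative deriv (deriv \<psi>) x) (at x)"
    using DERIV_deriv_iff_real_differentiable by auto
qed

lemma psi_deriv_bounds:
  obtains C where "C \<ge> 0" "\<And>x. x > 1 \<Longrightarrow> \<bar>deriv \<psi> x\<bar> \<le> C * x powr (\<alpha> - 1)"
    "\<And>x. x > 1 \<Longrightarrow> \<bar>deriv (deriv \<psi>) x\<bar> \<le> C * x powr (- 1) * (x - 1) powr (\<alpha> - 1)"
  using H1 unfolding H1_def by blast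

definition psi_rem :: "real \<Rightarrow> real" where
  "psi_rem h = \<psi> 1 * ((1 + h) powr (2 * \<beta>) - 1) - 2 * (\<psi> (1 + h) - \<psi> 1)"

lemma phi_second_diff_eq:
  assumes "h > 0"
  shows "(1 + h) powr (2 * \<beta>) * phi 1 - 2 * phi (1 + h) + phi 1 = 2 * lam * h powr \<alpha> + psi_rem h"
  using assms phi_eq[of 1] phi_eq[of "1 + h"] \<alpha>_pos unfolding psi_rem_def by (simp add: algebra_simps)

lemma psi_rem_bound_lt_1:
  assumes "\<alpha> < 1"
  obtains K where "\<And>h. 0 < h \<Longrightarrow> h \<le> 1 \<Longrightarrow> \<bar>psi_rem h\<bar> \<le> K * h powr (1 - \<alpha>) * h powr \<alpha>"
proof -
  obtain C where "C \<ge> 0" and C: "\<And>x. x > 1 \<Longrightarrow> \<bar>deriv \<psi> x\<bar> \<le> C * x powr (\<alpha> - 1)"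
    by (metis psi_deriv_bounds)
  have "\<bar>psi_rem h\<bar> \<le> (4 * \<bar>\<psi> 1\<bar> + 2 * C) * h powr (1 - \<alpha>) * h powr \<alpha>" if h: "0 < h" "h \<le> 1" for h
  proof -
    obtain z where z: "1 < z" "z < 1 + h" and eq: "\<psi> (1 + h) - \<psi> 1 = h * deriv \<psi> z"
      using MVT2[of 1 "1 + h" \<psi> "deriv \<psi>"] psi_has_deriv(1) h by force
    have "z powr (\<alpha> - 1) \<le> z powr 0" using z assms by (intro powr_mono) auto
    then have "C * z powr (\<alpha> - 1) \<le> C * 1" using \<open>C \<ge> 0\<close> z by (intro mult_left_mono) auto
    then have "\<bar>deriv \<psi> z\<bar> \<le> C" using C[OF z(1)] by simp
    then have "\<bar>\<psi> (1 + h) - \<psi> 1\<bar> \<le> C * h" using h unfolding eq by (simp add: abs_mult mult.commute)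
    moreover have "\<bar>\<psi> 1\<bar> * \<bar>(1 + h) powr (2 * \<beta>) - 1\<bar> \<le> \<bar>\<psi> 1\<bar> * (4 * h)"
      using one_plus_powr_sub_one_bound[of "2 * \<beta>" h] h \<beta>_pos \<beta>_lt_1 by (intro mult_left_mono) auto
    moreover have "\<bar>psi_rem h\<bar> \<le> \<bar>\<psi> 1\<bar> * \<bar>(1 + h) powr (2 * \<beta>) - 1\<bar> + 2 * \<bar>\<psi> (1 + h) - \<psi> 1\<bar>"
      unfolding psi_rem_def
      by (rule order.trans[OF abs_triangle_ineq4]) (simp only: abs_mult abs_numeral order_refl)
    ultimately have "\<bar>psi_rem h\<bar> \<le> (4 * \<bar>\<psi> 1\<bar> + 2 * C) * h" by (simp add: algebra_simps)
    also have "\<dots> = (4 * \<bar>\<psi> 1\<bar> + 2 * C) * h powr (1 - \<alpha>) * h powr \<alpha>"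
      using h by (simp add: mult.assoc powr_add[symmetric])
    finally show ?thesis .
  qed
  then show ?thesis using that by blast
qed

lemma psi_taylor_bound:
  assumes "\<alpha> \<ge> 1"
  obtains C where "C \<ge> 0" "\<And>h. 0 < h \<Longrightarrow> h \<le> 1 \<Longrightarrow> \<bar>\<psi> (1 + h) - \<psi> 1 - \<beta> * \<psi> 1 * h\<bar> \<le> C * h powr (\<alpha> + 1)"
proof -
  obtain C where "C \<ge> 0"
    and C: "\<And>x. x > 1 \<Longrightarrow> \<bar>deriv (deriv \<psi>) x\<bar> \<le> C * x powr (- 1) * (x - 1) powr (\<alpha> - 1)"
    by (metis psi_deriv_bounds)
  have "\<bar>\<psi> (1 + h) - \<psi> 1 - \<beta> * \<psi> 1 * h\<bar> \<le> C * h powr (\<alpha> + 1)" if h: "0 < h" "h \<le> 1" for h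
  proof -
    obtain z1 z2 where z: "1 < z2" "z2 < z1" "z1 < 1 + h"
      and eq: "\<psi> (1 + h) - \<psi> 1 - deriv \<psi> 1 * h = h * (z1 - 1) * deriv (deriv \<psi>) z2"
      by (rule second_order_mean_value[of 1 "1 + h" \<psi> "deriv \<psi>" "deriv (deriv \<psi>)"])
        (use h psi_has_deriv in auto)
    have "z2 powr (- 1) \<le> z2 powr 0" using z by (intro powr_mono) auto
    moreover have "(z2 - 1) powr (\<alpha> - 1) \<le> h powr (\<alpha> - 1)" using z assms by (intro powr_mono2) auto
    ultimately have "C * z2 powr (- 1) * (z2 - 1) powr (\<alpha> - 1) \<le> C * 1 * h powr (\<alpha> - 1)"
      using \<open>C \<ge> 0\<close> z by (intro mult_mono mult_left_mono) auto
    then have dd: "\<bar>deriv (deriv \<psi>) z2\<bar> \<le> C * h powr (\<alpha> - 1)" using C[OF z(1)] by simp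
    have "\<bar>\<psi> (1 + h) - \<psi> 1 - \<beta> * \<psi> 1 * h\<bar> = h * (z1 - 1) * \<bar>deriv (deriv \<psi>) z2\<bar>"
      using eq h z by (simp add: psi_deriv_one[OF assms] abs_mult mult.commute)
    also have "\<dots> \<le> h * h * (C * h powr (\<alpha> - 1))"
      using h z dd by (intro mult_mono) auto
    also have "\<dots> = C * (h powr (\<alpha> - 1) * h powr 2)"
      using h by (simp add: power2_eq_square mult_ac)
    also have "\<dots> = C * h powr (\<alpha> + 1)"
      unfolding powr_add[symmetric] by (simp add: add.commute)
    finally show ?thesis .
  qed
  with \<open>C \<ge> 0\<close> that show ?thesis by blast
qed

text \<open>The condition \<open>\<psi>' 1 = \<beta> * \<psi> 1\<close> makes the linear terms of the two Taylor expansions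
  cancel.\<close>

lemma psi_rem_bound_ge_1:
  assumes "\<alpha> \<ge> 1"
  obtains K where "\<And>h. 0 < h \<Longrightarrow> h \<le> 1 \<Longrightarrow> \<bar>psi_rem h\<bar> \<le> K * h powr (min 1 (2 - \<alpha>)) * h powr \<alpha>"
proof -
  obtain C where "C \<ge> 0"
    and psi_taylor: "\<And>h. 0 < h \<Longrightarrow> h \<le> 1 \<Longrightarrow> \<bar>\<psi> (1 + h) - \<psi> 1 - \<beta> * \<psi> 1 * h\<bar> \<le> C * h powr (\<alpha> + 1)"
    using psi_taylor_bound[OF assms] by blast
  define \<delta> where "\<delta> = min 1 (2 - \<alpha>)"
  have "\<bar>psi_rem h\<bar> \<le> (2 * \<bar>\<psi> 1\<bar> + 2 * C) * h powr \<delta> * h powr \<alpha>" if h: "0 < h" "h \<le> 1" for h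
  proof -
    have "psi_rem h = \<psi> 1 * ((1 + h) powr (2 * \<beta>) - 1 - 2 * \<beta> * h)
        - 2 * (\<psi> (1 + h) - \<psi> 1 - \<beta> * \<psi> 1 * h)"
      unfolding psi_rem_def by (simp add: algebra_simps)
    then have "\<bar>psi_rem h\<bar> \<le> \<bar>\<psi> 1\<bar> * \<bar>(1 + h) powr (2 * \<beta>) - 1 - 2 * \<beta> * h\<bar>
        + 2 * \<bar>\<psi> (1 + h) - \<psi> 1 - \<beta> * \<psi> 1 * h\<bar>"
      by (simp only:) (rule order.trans[OF abs_triangle_ineq4], simp only: abs_mult abs_numeral order_refl)
    moreover have "\<bar>\<psi> 1\<bar> * \<bar>(1 + h) powr (2 * \<beta>) - 1 - 2 * \<beta> * h\<bar> \<le> \<bar>\<psi> 1\<bar> * (2 * h\<^sup>2)"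
      using h \<beta>_pos \<beta>_lt_1 by (intro mult_left_mono one_plus_powr_taylor_bound) auto
    ultimately have "\<bar>psi_rem h\<bar> \<le> \<bar>\<psi> 1\<bar> * (2 * h\<^sup>2) + 2 * (C * h powr (\<alpha> + 1))"
      using psi_taylor[OF h] by linarith
    moreover have sq: "h\<^sup>2 \<le> h powr \<delta> * h powr \<alpha>"
      using powr_le_powr_mult_powr[of h \<delta> \<alpha> 2] h by (simp add: \<delta>_def flip: powr_numeral)
    moreover have cube: "h powr (\<alpha> + 1) \<le> h powr \<delta> * h powr \<alpha>"
      using powr_le_powr_mult_powr[of h \<delta> \<alpha> "\<alpha> + 1"] h by (simp add: \<delta>_def)
    moreover have "\<bar>\<psi> 1\<bar> * (2 * h\<^sup>2) \<le> \<bar>\<psi> 1\<bar> * (2 * (h powr \<delta> * h powr \<alpha>))"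
      using sq by (intro mult_left_mono) auto
    moreover have "C * h powr (\<alpha> + 1) \<le> C * (h powr \<delta> * h powr \<alpha>)"
      using cube \<open>C \<ge> 0\<close> by (intro mult_left_mono)
    ultimately have "\<bar>psi_rem h\<bar> \<le> \<bar>\<psi> 1\<bar> * (2 * (h powr \<delta> * h powr \<alpha>)) + 2 * (C * (h powr \<delta> * h powr \<alpha>))"
      by linarith
    then show ?thesis by (simp add: algebra_simps)
  qed
  then show ?thesis unfolding \<delta>_def by (rule that)
qed

lemma psi_rem_small: "eventually (\<lambda>h. \<bar>psi_rem h\<bar> \<le> lam * h powr \<alpha>) (at_right 0)"
proof -
  obtain K \<delta> where "\<delta> > 0" and bound: "\<And>h. 0 < h \<Longrightarrow> h \<le> 1 \<Longrightarrow> \<bar>psi_rem h\<bar> \<le> K * h powr \<delta> * h powr \<alpha>"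
  proof (cases "\<alpha> < 1")
    case True
    obtain K where "\<And>h. 0 < h \<Longrightarrow> h \<le> 1 \<Longrightarrow> \<bar>psi_rem h\<bar> \<le> K * h powr (1 - \<alpha>) * h powr \<alpha>"
      using psi_rem_bound_lt_1[OF True] by metis
    then show ?thesis using True by (intro that[of "1 - \<alpha>" K]) auto
  next
    case False
    obtain K where "\<And>h. 0 < h \<Longrightarrow> h \<le> 1 \<Longrightarrow> \<bar>psi_rem h\<bar> \<le> K * h powr (min 1 (2 - \<alpha>)) * h powr \<alpha>"
      using psi_rem_bound_ge_1 False by (metis linorder_not_le less_imp_le)
    then show ?thesis using \<alpha>_lt_2 by (intro that[of "min 1 (2 - \<alpha>)" K]) auto
  qed
  have "((\<lambda>h. h powr \<delta>) \<longlongrightarrow> 0) (at_right 0)"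
    using \<open>\<delta> > 0\<close> by real_asymp
  then have "((\<lambda>h. K * h powr \<delta>) \<longlongrightarrow> 0) (at_right 0)"
    by (rule tendsto_mult_right_zero)
  then have "eventually (\<lambda>h. K * h powr \<delta> < lam) (at_right 0)"
    using lam_pos by (rule order_tendstoD)
  moreover have "eventually (\<lambda>h. 0 < h \<and> h \<le> 1) (at_right (0::real))"
    by (auto simp: eventually_at_right_field intro!: exI[of _ 1])
  ultimately show ?thesis
  proof eventually_elim
    case (elim h)
    then have "K * h powr \<delta> * h powr \<alpha> \<le> lam * h powr \<alpha>" by (intro mult_right_mono) auto
    then show ?case using bound elim by (meson order.trans)
  qed
qed

lemma eventually_phi_second_diff_ge:
  "eventually (\<lambda>h. lam * h powr \<alpha> \<le> (1 + h) powr (2 * \<beta>) * phi 1 - 2 * phi (1 + h) + phi 1) (at_right 0)"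
  using psi_rem_small eventually_at_right_less[of 0]
proof eventually_elim
  case (elim h)
  then show ?case using phi_second_diff_eq[of h] lam_pos by (simp add: abs_le_iff)
qed

lemma phi_one_pos: "phi 1 > 0"
proof -
  have phi_one: "phi 1 = cov 1 1" using cov_eq_homog[of 1 1] by (simp add: homog_def)
  have "eventually (\<lambda>h. 0 < h \<and> lam * h powr \<alpha> \<le> (1 + h) powr (2 * \<beta>) * phi 1 - 2 * phi (1 + h) + phi 1)
      (at_right 0)"
    using eventually_phi_second_diff_ge eventually_at_right_less[of 0] by eventually_elim simp
  then obtain h where h: "0 < h" "lam * h powr \<alpha> \<le> (1 + h) powr (2 * \<beta>) * phi 1 - 2 * phi (1 + h) + phi 1"
    using eventually_happens'[OF trivial_limit_at_right_real] by blast
  show ?thesis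
  proof (rule ccontr)
    assume "\<not> phi 1 > 0"
    then have "phi 1 = 0" using phi_one cov_diag_nonneg[of 1] by simp
    moreover have "(cov 1 (1 + h))\<^sup>2 \<le> cov 1 1 * cov (1 + h) (1 + h)"
      using cov_Cauchy_Schwarz h by simp
    moreover have "cov 1 (1 + h) = phi (1 + h)" using cov_eq_homog[of 1 "1 + h"] h by (simp add: homog_def)
    ultimately have "phi (1 + h) = 0" using phi_one by simp
    then show False using h \<open>phi 1 = 0\<close> lam_pos by (simp add: mult_le_0_iff)
  qed
qed

lemma incr_var_eq_phi:
  assumes "u > 0"
  shows "incr_var u = u powr (2 * \<beta>) * ((1 + 1 / u) powr (2 * \<beta>) * phi 1 - 2 * phi (1 + 1 / u) + phi 1)"
proof -
  have "(u + 1) powr (2 * \<beta>) = u powr (2 * \<beta>) * (1 + 1 / u) powr (2 * \<beta>)"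
    using assms by (simp add: powr_mult[symmetric] distrib_left)
  moreover have "(u + 1) / u = 1 + 1 / u" using assms by (simp add: field_simps)
  ultimately show ?thesis
    using assms incr_var_eq_cov[of u] cov_eq_homog[of "u + 1" "u + 1"] cov_eq_homog[of u "u + 1"]
      cov_eq_homog[of u u]
    by (simp add: homog_def algebra_simps)
qed

lemma incr_var_ge_far:
  obtains u0 where "u0 \<ge> 1" "\<And>u. u \<ge> u0 \<Longrightarrow> incr_var u \<ge> lam * u powr (2 * \<beta> - \<alpha>)"
proof -
  have "eventually (\<lambda>u. lam * (inverse u) powr \<alpha>
      \<le> (1 + inverse u) powr (2 * \<beta>) * phi 1 - 2 * phi (1 + inverse u) + phi 1) at_top"
    using eventually_compose_filterlim[OF eventually_phi_second_diff_ge filterlim_inverse_at_right_top] .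
  then obtain N where N: "\<And>u. u \<ge> N \<Longrightarrow> lam * (1 / u) powr \<alpha>
      \<le> (1 + 1 / u) powr (2 * \<beta>) * phi 1 - 2 * phi (1 + 1 / u) + phi 1"
    by (auto simp: eventually_at_top_linorder inverse_eq_divide)
  show ?thesis
  proof (rule that[of "max 1 N"])
    fix u assume u: "u \<ge> max 1 N"
    then have "u powr (2 * \<beta>) * (lam * (1 / u) powr \<alpha>) \<le> incr_var u"
      using incr_var_eq_phi[of u] N[of u] by (simp add: mult_left_mono)
    moreover have "u powr (2 * \<beta>) * (lam * (1 / u) powr \<alpha>) = lam * u powr (2 * \<beta> - \<alpha>)"
      using u by (simp add: powr_divide powr_diff)
    ultimately show "incr_var u \<ge> lam * u powr (2 * \<beta> - \<alpha>)" by simp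
  qed simp
qed

lemma incr_var_ge_near:
  assumes "u \<ge> 0"
  shows "incr_var u \<ge> phi 1 * \<beta>\<^sup>2 * (u + 1) powr (2 * \<beta> - 2)"
proof -
  have sqrt_cov: "sqrt (cov x x) = x powr \<beta> * sqrt (phi 1)" if "x \<ge> 0" for x
  proof (cases "x = 0")
    case True
    then show ?thesis using cov_zero_left by simp
  next
    case False
    have "sqrt (x powr (2 * \<beta>)) = x powr \<beta>" using powr_half_sqrt_powr[of x "2 * \<beta>"] that by simp
    then show ?thesis using cov_eq_homog[of x x] that False by (simp add: homog_def real_sqrt_mult)
  qed
  have nonneg: "0 \<le> sqrt (phi 1) * (\<beta> * (u + 1) powr (\<beta> - 1))"
    using \<beta>_pos phi_one_pos by simp
  have "sqrt (phi 1) * (\<beta> * (u + 1) powr (\<beta> - 1)) \<le> sqrt (phi 1) * ((u + 1) powr \<beta> - u powr \<beta>)"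
    using powr_increment_ge[OF assms \<beta>_pos \<beta>_lt_1] phi_one_pos by (intro mult_left_mono) auto
  also have "\<dots> = sqrt (cov (u + 1) (u + 1)) - sqrt (cov u u)"
    using assms by (simp add: sqrt_cov algebra_simps)
  finally have "(sqrt (phi 1) * (\<beta> * (u + 1) powr (\<beta> - 1)))\<^sup>2 \<le> (sqrt (cov (u + 1) (u + 1)) - sqrt (cov u u))\<^sup>2"
    using nonneg by (intro power_mono)
  also have "\<dots> \<le> incr_var u" by (rule incr_var_ge_sqrt_diff[OF assms])
  moreover have "((u + 1) powr (\<beta> - 1))\<^sup>2 = (u + 1) powr (2 * \<beta> - 2)"
    unfolding power2_eq_square powr_add[symmetric] by (rule arg_cong[where f = "\<lambda>x. (u + 1) powr x"]) simp
  ultimately show ?thesis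
    using phi_one_pos by (simp add: power_mult_distrib mult_ac)
qed

lemma incr_var_lower_bound:
  obtains a where "a > 0" "\<And>u. u \<ge> 0 \<Longrightarrow> incr_var u \<ge> a * (u + 1) powr (2 * \<beta> - \<alpha>)"
proof -
  obtain u0 where "u0 \<ge> 1" and far: "\<And>u. u \<ge> u0 \<Longrightarrow> incr_var u \<ge> lam * u powr (2 * \<beta> - \<alpha>)"
    using incr_var_ge_far by blast
  define p where "p = 2 * \<beta> - \<alpha>"
  have "p \<ge> 0" using \<alpha>_le_2\<beta> by (simp add: p_def)
  define b where "b = phi 1 * \<beta>\<^sup>2 * (u0 + 1) powr (2 * \<beta> - 2)"
  have "b > 0" using phi_one_pos \<beta>_pos \<open>u0 \<ge> 1\<close> by (simp add: b_def)
  define a where "a = min (lam / 2 powr p) (b / (u0 + 1) powr p)"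
  have "a > 0" using lam_pos \<open>b > 0\<close> \<open>u0 \<ge> 1\<close> by (simp add: a_def)
  have "incr_var u \<ge> a * (u + 1) powr p" if "u \<ge> 0" for u
  proof (cases "u \<ge> u0")
    case True
    have "(u + 1) powr p \<le> (2 * u) powr p" using True \<open>u0 \<ge> 1\<close> \<open>p \<ge> 0\<close> by (intro powr_mono2) auto
    then have "a * (u + 1) powr p \<le> lam / 2 powr p * (2 powr p * u powr p)"
      using \<open>a > 0\<close> that by (intro mult_mono) (auto simp: a_def powr_mult)
    also have "\<dots> = lam * u powr p" by simp
    also have "\<dots> \<le> incr_var u" using far True by (simp add: p_def)
    finally show ?thesis .
  next
    case False
    have "a * (u + 1) powr p \<le> b / (u0 + 1) powr p * (u0 + 1) powr p"
      using False that \<open>p \<ge> 0\<close> \<open>b > 0\<close> by (intro mult_mono powr_mono2) (auto simp: a_def)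
    also have "\<dots> = b" using \<open>u0 \<ge> 1\<close> by simp
    also have "\<dots> \<le> phi 1 * \<beta>\<^sup>2 * (u + 1) powr (2 * \<beta> - 2)"
      unfolding b_def using False that \<beta>_lt_1 phi_one_pos by (intro mult_left_mono powr_mono2') auto
    also have "\<dots> \<le> incr_var u" using incr_var_ge_near that by simp
    finally show ?thesis .
  qed
  then show ?thesis using that \<open>a > 0\<close> unfolding p_def by blast
qed

section \<open>Decay of the increment correlation on D2\<close>

lemma c_gt_1: "c > 1" and \<nu>_gt_1: "\<nu> > 1"
  using H2 unfolding H2_def by auto

lemma phi_has_deriv:
  assumes "x > 1"
  shows "(phi has_real_derivative deriv phi x) (at x)"
    and "(deriv phi has_real_derivative deriv (deriv phi) x) (at x)"
proof -
  define p' where "p' y = - lam * (\<alpha> * (y - 1) powr (\<alpha> - 1)) + deriv \<psi> y" for y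
  define p'' where "p'' y = - lam * (\<alpha> * ((\<alpha> - 1) * (y - 1) powr (\<alpha> - 1 - 1))) + deriv (deriv \<psi>) y" for y
  have dpow: "((\<lambda>y. (y - 1) powr r) has_real_derivative r * (y - 1) powr (r - 1)) (at y)"
    if "y > 1" for y r
  proof -
    have "((\<lambda>z. z powr r) has_real_derivative r * (y - 1) powr (r - 1)) (at (y - 1))"
      using that by (intro has_real_derivative_powr) auto
    from DERIV_chain2[OF this DERIV_diff[OF DERIV_ident DERIV_const]] show ?thesis by simp
  qed
  have d1: "(phi has_real_derivative p' y) (at y)" if "y > 1" for y
  proof -
    have "((\<lambda>y. - lam * (y - 1) powr \<alpha> + \<psi> y) has_real_derivative p' y) (at y)"
      unfolding p'_def using that psi_has_deriv(1)[of y]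
      by (intro DERIV_add DERIV_cmult dpow) auto
    then show ?thesis
      by (rule has_field_derivative_transform_within_open[where S = "{1<..}"]) (use that phi_eq in auto)
  qed
  have d2: "(deriv phi has_real_derivative p'' y) (at y)" if "y > 1" for y
  proof -
    have "(p' has_real_derivative p'' y) (at y)"
      unfolding p'_def[abs_def] p''_def using that psi_has_deriv(2)[of y]
      by (intro DERIV_add DERIV_cmult dpow) auto
    then show ?thesis
      by (rule has_field_derivative_transform_within_open[where S = "{1<..}"])
        (use that d1 DERIV_imp_deriv in \<open>auto simp: eq_commute\<close>)
  qed
  show "(phi has_real_derivative deriv phi x) (at x)"
    and "(deriv phi has_real_derivative deriv (deriv phi) x) (at x)"
    using d1 d2 DERIV_imp_deriv assms by metis+
qed

definition decay_exp :: real where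
  "decay_exp = (if \<alpha> < 1 then \<nu> else 2 - \<alpha>)"

lemma phi_derivative_decay:
  obtains C where "derivative_decay phi (deriv phi) (deriv (deriv phi)) c C decay_exp"
proof -
  obtain C where "C > 0" and C: "\<And>x. x \<ge> c \<Longrightarrow>
      (\<alpha> < 1 \<longrightarrow> \<bar>deriv phi x\<bar> \<le> C * x powr (- \<nu>) \<and> \<bar>deriv (deriv phi) x\<bar> \<le> C * x powr (- \<nu> - 1)) \<and>
      (\<alpha> \<ge> 1 \<longrightarrow> \<bar>deriv phi x\<bar> \<le> C * x powr (\<alpha> - 2) \<and> \<bar>deriv (deriv phi) x\<bar> \<le> C * x powr (\<alpha> - 3))"
    using H2 unfolding H2_def by blast
  have exps: "- decay_exp = \<alpha> - 2" "- decay_exp - 1 = \<alpha> - 3" if "\<not> \<alpha> < 1"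
    using that unfolding decay_exp_def by auto
  show ?thesis
  proof (rule that[of C], unfold_locales)
    show "c > 1" "C \<ge> 0" by (fact c_gt_1) (use \<open>C > 0\<close> in simp)
    show "decay_exp \<ge> 0" using \<nu>_gt_1 \<alpha>_lt_2 unfolding decay_exp_def by simp
    fix x assume "x \<ge> c"
    then show "(phi has_real_derivative deriv phi x) (at x)"
      and "(deriv phi has_real_derivative deriv (deriv phi) x) (at x)"
      using c_gt_1 by (auto intro: phi_has_deriv)
    show "\<bar>deriv phi x\<bar> \<le> C * x powr (- decay_exp)"
      and "\<bar>deriv (deriv phi) x\<bar> \<le> C * x powr (- decay_exp - 1)"
      using C[OF \<open>x \<ge> c\<close>] exps by (auto simp: decay_exp_def split: if_splits)
  qed
qed

lemma rect_diff_cov_bound: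
  obtains K where "\<And>s t. s \<ge> 0 \<Longrightarrow> t \<ge> c * (s + 1) \<Longrightarrow>
    \<bar>rect_diff cov s t\<bar> \<le> K * (s + 1) powr (2 * \<beta> - 2 + decay_exp) * (t + 1) powr (- decay_exp)"
proof -
  obtain C where "derivative_decay phi (deriv phi) (deriv (deriv phi)) c C decay_exp"
    by (rule phi_derivative_decay)
  then interpret derivative_decay phi "deriv phi" "deriv (deriv phi)" c C decay_exp .
  have "2 * \<beta> - 1 + decay_exp \<ge> 0"
    using \<nu>_gt_1 \<alpha>_le_2\<beta> \<beta>_pos unfolding decay_exp_def by auto
  then obtain K where K: "\<And>s t. s \<ge> 0 \<Longrightarrow> t \<ge> c * (s + 1) \<Longrightarrow> \<bar>rect_diff (homog (2 * \<beta>) phi) s t\<bar>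
      \<le> K * (s + 1) powr (2 * \<beta> - 2 + decay_exp) * (t + 1) powr (- decay_exp)"
    using rect_diff_homog_bound by blast
  show ?thesis
  proof (rule that[of K])
    fix s t :: real
    assume s: "s \<ge> 0" and t: "t \<ge> c * (s + 1)"
    then have "t \<ge> 0" using c_gt_1 by (smt (verit) mult_nonneg_nonneg)
    then have "rect_diff cov s t = rect_diff (homog (2 * \<beta>) phi) s t"
      using s unfolding rect_diff_def by (simp add: cov_eq_homog)
    then show "\<bar>rect_diff cov s t\<bar> \<le> K * (s + 1) powr (2 * \<beta> - 2 + decay_exp) * (t + 1) powr (- decay_exp)"
      using K[OF s t] by simp
  qed
qed

lemma sqrt_incr_var_lower_bound:
  obtains b where "b > 0" "\<And>u. u \<ge> 0 \<Longrightarrow> b * (u + 1) powr ((2 * \<beta> - \<alpha>) / 2) \<le> sqrt (incr_var u)"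
proof -
  obtain a where "a > 0" and a: "\<And>u. u \<ge> 0 \<Longrightarrow> incr_var u \<ge> a * (u + 1) powr (2 * \<beta> - \<alpha>)"
    using incr_var_lower_bound by blast
  show ?thesis
  proof (rule that[of "sqrt a"])
    show "sqrt a > 0" using \<open>a > 0\<close> by simp
    fix u :: real
    assume "u \<ge> 0"
    then show "sqrt a * (u + 1) powr ((2 * \<beta> - \<alpha>) / 2) \<le> sqrt (incr_var u)"
      using real_sqrt_le_mono[OF a[OF \<open>u \<ge> 0\<close>]] by (simp add: real_sqrt_mult powr_half_sqrt_powr)
  qed
qed

lemma Phi_far_bound:
  obtains K where "K \<ge> 0" "\<And>s t. s \<ge> 0 \<Longrightarrow> t \<ge> c * (s + 1) \<Longrightarrow> \<bar>Phi M X s t\<bar>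
    \<le> K * (s + 1) powr (2 * \<beta> - 2 + decay_exp - (2 * \<beta> - \<alpha>) / 2) * (t + 1) powr (- (decay_exp + (2 * \<beta> - \<alpha>) / 2))"
proof -
  define E where "E = 2 * \<beta> - 2 + decay_exp"
  define p where "p = 2 * \<beta> - \<alpha>"
  obtain K1 where K1: "\<And>s t. s \<ge> 0 \<Longrightarrow> t \<ge> c * (s + 1) \<Longrightarrow>
      \<bar>rect_diff cov s t\<bar> \<le> K1 * (s + 1) powr E * (t + 1) powr (- decay_exp)"
    unfolding E_def using rect_diff_cov_bound by blast
  obtain b where "b > 0" and b: "\<And>u. u \<ge> 0 \<Longrightarrow> b * (u + 1) powr (p / 2) \<le> sqrt (incr_var u)"
    unfolding p_def using sqrt_incr_var_lower_bound by blast
  have "\<bar>Phi M X s t\<bar> \<le> \<bar>K1\<bar> / b\<^sup>2 * (s + 1) powr (E - p / 2) * (t + 1) powr (- (decay_exp + p / 2))"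
    if s: "s \<ge> 0" and t: "t \<ge> c * (s + 1)" for s t
  proof -
    have "t \<ge> 0" using s t c_gt_1 by (smt (verit) mult_nonneg_nonneg)
    have "\<bar>Phi M X s t\<bar> = \<bar>rect_diff cov s t\<bar> / (sqrt (incr_var s) * sqrt (incr_var t))"
      using Phi_eq_rect_diff_cov[OF s \<open>t \<ge> 0\<close>] incr_var_nonneg by (simp add: abs_divide abs_mult)
    also have "\<dots> \<le> \<bar>K1\<bar> * (s + 1) powr E * (t + 1) powr (- decay_exp)
        / (b * (s + 1) powr (p / 2) * (b * (t + 1) powr (p / 2)))"
    proof (rule frac_le)
      show "\<bar>rect_diff cov s t\<bar> \<le> \<bar>K1\<bar> * (s + 1) powr E * (t + 1) powr (- decay_exp)"
        using K1[OF s t] mult_right_mono[OF abs_ge_self, of "(s + 1) powr E * (t + 1) powr (- decay_exp)" K1]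
        by (simp add: mult.assoc)
      show "b * (s + 1) powr (p / 2) * (b * (t + 1) powr (p / 2)) \<le> sqrt (incr_var s) * sqrt (incr_var t)"
        using b[OF s] b[OF \<open>t \<ge> 0\<close>] \<open>b > 0\<close> incr_var_nonneg by (intro mult_mono) auto
    qed (use \<open>b > 0\<close> s \<open>t \<ge> 0\<close> in auto)
    also have "\<dots> = \<bar>K1\<bar> / b\<^sup>2 * (s + 1) powr (E - p / 2) * (t + 1) powr (- (decay_exp + p / 2))"
    proof -
      have "(s + 1) powr (E - p / 2) = (s + 1) powr E / (s + 1) powr (p / 2)" by (rule powr_diff)
      moreover have "(t + 1) powr (- (decay_exp + p / 2)) = (t + 1) powr (- decay_exp) / (t + 1) powr (p / 2)"
        by (simp add: powr_diff[symmetric])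
      ultimately show ?thesis using \<open>b > 0\<close> s \<open>t \<ge> 0\<close> by (simp add: power2_eq_square)
    qed
    finally show ?thesis .
  qed
  then show ?thesis using that[of "\<bar>K1\<bar> / b\<^sup>2"] unfolding E_def p_def by simp
qed

text \<open>The cap \<open>3 / 4\<close> is arbitrary: any bound below 1 keeps the integral of
  \<open>((s + 1) * (t + 1)) powr (- kernel_exp q)\<close> over \<open>[0, N]\<^sup>2\<close> of order \<open>N powr (2 - 2 * kernel_exp q)\<close>.\<close>

definition kernel_exp :: "nat \<Rightarrow> real" where
  "kernel_exp q = min (3 / 4) (min (q * (2 - \<alpha>) / 2) (q * (decay_exp + (2 * \<beta> - \<alpha>) / 2) / 2))"

lemma kernel_exp_bounds:
  assumes "q \<ge> 1" "\<alpha> \<le> 2 - 1 / q"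
  shows "1 / 2 \<le> kernel_exp q" "kernel_exp q < 1" "\<alpha> < 2 - 1 / q \<Longrightarrow> 1 / 2 < kernel_exp q"
proof -
  have q_pos: "real q > 0" using assms by simp
  have "1 \<le> q * (2 - \<alpha>)" and strict: "\<alpha> < 2 - 1 / q \<Longrightarrow> 1 < q * (2 - \<alpha>)"
    using assms q_pos by (simp_all add: field_simps)
  moreover have "q * (2 - \<alpha>) \<le> q * (decay_exp + (2 * \<beta> - \<alpha>) / 2)" if "\<not> \<alpha> < 1"
    using that \<alpha>_le_2\<beta> q_pos unfolding decay_exp_def by (intro mult_left_mono) auto
  moreover have "1 < q * (decay_exp + (2 * \<beta> - \<alpha>) / 2)" if "\<alpha> < 1"
  proof -
    have "0 \<le> (2 * \<beta> - \<alpha>) / 2" using \<alpha>_le_2\<beta> by simp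
    then have "1 < decay_exp + (2 * \<beta> - \<alpha>) / 2"
      using \<nu>_gt_1 unfolding decay_exp_def if_P[OF that] by linarith
    then have "1 * 1 < q * (decay_exp + (2 * \<beta> - \<alpha>) / 2)"
      using assms by (intro mult_le_less_imp_less) auto
    then show ?thesis by simp
  qed
  ultimately have "1 \<le> q * (decay_exp + (2 * \<beta> - \<alpha>) / 2)"
    and "\<alpha> < 2 - 1 / q \<Longrightarrow> 1 < q * (decay_exp + (2 * \<beta> - \<alpha>) / 2)"
    by (cases "\<alpha> < 1"; force)+
  with \<open>1 \<le> q * (2 - \<alpha>)\<close> strict
  show "1 / 2 \<le> kernel_exp q" "kernel_exp q < 1" "\<alpha> < 2 - 1 / q \<Longrightarrow> 1 / 2 < kernel_exp q"
    unfolding kernel_exp_def by auto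
qed

lemma Phi_pow_far_bound:
  obtains K where "K \<ge> 0" "\<And>s t. s \<ge> 0 \<Longrightarrow> t \<ge> c * (s + 1) \<Longrightarrow>
    \<bar>Phi M X s t\<bar> ^ q \<le> K * (s + 1) powr (- kernel_exp q) * (t + 1) powr (- kernel_exp q)"
proof -
  define A where "A = 2 * \<beta> - 2 + decay_exp - (2 * \<beta> - \<alpha>) / 2"
  define B where "B = decay_exp + (2 * \<beta> - \<alpha>) / 2"
  define \<gamma> where "\<gamma> = kernel_exp q"
  obtain K where "K \<ge> 0"
    and K: "\<And>s t. s \<ge> 0 \<Longrightarrow> t \<ge> c * (s + 1) \<Longrightarrow> \<bar>Phi M X s t\<bar> \<le> K * (s + 1) powr A * (t + 1) powr (- B)"
    unfolding A_def B_def using Phi_far_bound by blast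
  have "\<bar>Phi M X s t\<bar> ^ q \<le> K ^ q * (s + 1) powr (- \<gamma>) * (t + 1) powr (- \<gamma>)"
    if s: "s \<ge> 0" and t: "t \<ge> c * (s + 1)" for s t
  proof -
    have "s + 1 \<le> c * (s + 1)" using s c_gt_1 by simp
    then have st: "1 \<le> s + 1" "s + 1 \<le> t + 1" using s t by linarith+
    have "\<bar>Phi M X s t\<bar> ^ q \<le> (K * (s + 1) powr A * (t + 1) powr (- B)) ^ q"
      using K[OF s t] by (intro power_mono) auto
    also have "\<dots> = K ^ q * ((s + 1) powr (q * A) * (t + 1) powr (- (q * B)))"
      using st by (simp add: power_mult_distrib powr_power mult_ac)
    also have "\<dots> \<le> K ^ q * ((s + 1) powr (- \<gamma>) * (t + 1) powr (- \<gamma>))"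
    proof (intro mult_left_mono powr_mult_powr_le_diag st)
      have "q * A - q * B = - (q * (2 - \<alpha>))" unfolding A_def B_def by (simp add: algebra_simps)
      moreover have "\<gamma> \<le> q * (2 - \<alpha>) / 2"
        unfolding \<gamma>_def kernel_exp_def by (rule min.coboundedI2, rule min.cobounded1)
      ultimately show "q * A - q * B \<le> - 2 * \<gamma>" by linarith
      have "\<gamma> \<le> q * B / 2"
        unfolding \<gamma>_def kernel_exp_def B_def by (rule min.coboundedI2, rule min.cobounded2)
      then show "2 * \<gamma> \<le> q * B" by linarith
      show "0 \<le> \<gamma>" using \<alpha>_lt_2 \<alpha>_le_2\<beta> \<nu>_gt_1 unfolding \<gamma>_def kernel_exp_def decay_exp_def by auto
    qed (use \<open>K \<ge> 0\<close> in simp)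
    finally show ?thesis by (simp add: mult_ac)
  qed
  then show ?thesis using that[of "K ^ q"] \<open>K \<ge> 0\<close> unfolding \<gamma>_def by simp
qed

lemma Phi_pow_D2_bound:
  obtains K where "K \<ge> 0" "\<And>s t. s \<ge> 0 \<Longrightarrow> t \<ge> 0 \<Longrightarrow>
    indicator (D2 c) (s, t) * \<bar>Phi M X s t\<bar> ^ q \<le> K * (s + 1) powr (- kernel_exp q) * (t + 1) powr (- kernel_exp q)"
proof -
  obtain K where "K \<ge> 0" and K: "\<And>s t. s \<ge> 0 \<Longrightarrow> t \<ge> c * (s + 1) \<Longrightarrow>
      \<bar>Phi M X s t\<bar> ^ q \<le> K * (s + 1) powr (- kernel_exp q) * (t + 1) powr (- kernel_exp q)"
    using Phi_pow_far_bound by blast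
  show ?thesis
  proof (rule that[OF \<open>K \<ge> 0\<close>])
    fix s t :: real
    assume "s \<ge> 0" "t \<ge> 0"
    then show "indicator (D2 c) (s, t) * \<bar>Phi M X s t\<bar> ^ q
        \<le> K * (s + 1) powr (- kernel_exp q) * (t + 1) powr (- kernel_exp q)"
      using K[of s t] K[of t s] mem_D2_imp[of s t c] \<open>K \<ge> 0\<close>
      by (cases "(s, t) \<in> D2 c") (auto simp: Phi_commute mult_ac)
  qed
qed

end

section \<open>The rescaled integral\<close>

lemma has_integral_shifted_powr:
  fixes N \<gamma> :: real
  assumes "N \<ge> 0" "\<gamma> < 1"
  shows "((\<lambda>x. (x + 1) powr (- \<gamma>)) has_integral ((N + 1) powr (1 - \<gamma>) - 1) / (1 - \<gamma>)) {0..N}"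
proof -
  have "((\<lambda>x. (x + 1) powr (1 - \<gamma>) / (1 - \<gamma>)) has_real_derivative (x + 1) powr (- \<gamma>)) (at x)"
    if "x \<ge> 0" for x
  proof -
    have "((\<lambda>z. z powr (1 - \<gamma>)) has_real_derivative (1 - \<gamma>) * (x + 1) powr (1 - \<gamma> - 1)) (at (x + 1))"
      using that by (intro has_real_derivative_powr) auto
    from DERIV_cdivide[OF DERIV_chain2[OF this DERIV_add[OF DERIV_ident DERIV_const]], of "1 - \<gamma>"]
    show ?thesis using assms by simp
  qed
  then have "((\<lambda>x. (x + 1) powr (- \<gamma>)) has_integral
      (N + 1) powr (1 - \<gamma>) / (1 - \<gamma>) - (0 + 1) powr (1 - \<gamma>) / (1 - \<gamma>)) {0..N}"
    using assms(1) by (intro fundamental_theorem_of_calculus)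
      (auto simp: has_real_derivative_iff_has_vector_derivative has_vector_derivative_at_within)
  then show ?thesis by (simp add: diff_divide_distrib)
qed

lemma box_integral_bound:
  fixes F :: "real \<times> real \<Rightarrow> real"
  assumes "K \<ge> 0" "0 \<le> \<gamma>" "\<gamma> < 1" "N \<ge> 0"
    and F: "\<And>s t. s \<ge> 0 \<Longrightarrow> t \<ge> 0 \<Longrightarrow> \<bar>F (s, t)\<bar> \<le> K * (s + 1) powr (- \<gamma>) * (t + 1) powr (- \<gamma>)"
  shows "\<bar>integral ({0..N} \<times> {0..N}) F\<bar> \<le> K / (1 - \<gamma>)\<^sup>2 * (N + 1) powr (2 - 2 * \<gamma>)"
proof -
  define G where "G x = K * (fst x + 1) powr (- \<gamma>) * (snd x + 1) powr (- \<gamma>)" for x :: "real \<times> real"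
  define I where "I = ((N + 1) powr (1 - \<gamma>) - 1) / (1 - \<gamma>)"
  have box: "{0..N} \<times> {0..N} = cbox (0, 0) (N, N)" by (simp add: cbox_Pair_eq)
  have cont: "continuous_on (cbox (0, 0) (N, N)) G"
    unfolding G_def by (intro continuous_intros) (auto simp: cbox_Pair_eq)
  have I: "integral {0..N} (\<lambda>x. (x + 1) powr (- \<gamma>)) = I"
    unfolding I_def using has_integral_shifted_powr[OF assms(4,3)] by (rule integral_unique)
  have "integral ({0..N} \<times> {0..N}) G = integral {0..N} (\<lambda>s. integral {0..N} (\<lambda>t. G (s, t)))"
    unfolding box using integral_prod_continuous[OF cont] by simp
  also have "\<dots> = K * I * I" using I by (simp add: G_def mult_ac)
  finally have IG: "integral ({0..N} \<times> {0..N}) G = K * I * I" .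
  have "0 \<le> I" "I \<le> (N + 1) powr (1 - \<gamma>) / (1 - \<gamma>)"
    using assms ge_one_powr_ge_zero[of "N + 1" "1 - \<gamma>"] unfolding I_def by (auto simp: divide_right_mono)
  have "\<bar>integral ({0..N} \<times> {0..N}) F\<bar> \<le> integral ({0..N} \<times> {0..N}) G"
  proof (cases "F integrable_on ({0..N} \<times> {0..N})")
    case True
    have "G integrable_on ({0..N} \<times> {0..N})" unfolding box using cont by (rule integrable_continuous)
    moreover have "norm (F x) \<le> G x" if "x \<in> {0..N} \<times> {0..N}" for x
      using that by (cases x) (simp add: G_def F)
    ultimately show ?thesis using integral_norm_bound_integral[OF True] by simp
  next
    case False
    then show ?thesis using IG \<open>0 \<le> I\<close> assms by (simp add: not_integrable_integral)
  qed
  also have "\<dots> \<le> K * ((N + 1) powr (1 - \<gamma>) / (1 - \<gamma>) * ((N + 1) powr (1 - \<gamma>) / (1 - \<gamma>)))"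
    unfolding IG mult.assoc using \<open>0 \<le> I\<close> \<open>I \<le> _\<close> assms by (intro mult_left_mono mult_mono) auto
  also have "\<dots> = K / (1 - \<gamma>)\<^sup>2 * (N + 1) powr (2 - 2 * \<gamma>)"
    using assms by (simp add: power2_eq_square powr_add[symmetric])
  finally show ?thesis .
qed

lemma varphi_aq_mult_tendsto_0:
  fixes I :: "real \<Rightarrow> real"
  assumes "T > 0" "1 / 2 \<le> \<gamma>" "\<gamma> < 1" "\<alpha> < 2 - 1 / q \<Longrightarrow> 1 / 2 < \<gamma>"
    and I: "\<And>\<epsilon>. 0 < \<epsilon> \<Longrightarrow> \<bar>I \<epsilon>\<bar> \<le> K * (T / \<epsilon> + 1) powr (2 - 2 * \<gamma>)"
  shows "((\<lambda>\<epsilon>. varphi_aq \<alpha> q \<epsilon> * I \<epsilon>) \<longlongrightarrow> 0) (at_right 0)"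
proof (cases "\<alpha> < 2 - 1 / q")
  case True
  have "((\<lambda>\<epsilon>. \<bar>K\<bar> * (\<epsilon> * (T / \<epsilon> + 1) powr (2 - 2 * \<gamma>))) \<longlongrightarrow> 0) (at_right 0)"
    using assms(1,3) assms(4)[OF True] by real_asymp
  moreover have "eventually (\<lambda>\<epsilon>. norm (varphi_aq \<alpha> q \<epsilon> * I \<epsilon>)
      \<le> \<bar>K\<bar> * (\<epsilon> * (T / \<epsilon> + 1) powr (2 - 2 * \<gamma>))) (at_right 0)"
    using eventually_at_right_less[of 0]
  proof eventually_elim
    case (elim \<epsilon>)
    have "\<epsilon> * \<bar>I \<epsilon>\<bar> \<le> \<epsilon> * (\<bar>K\<bar> * (T / \<epsilon> + 1) powr (2 - 2 * \<gamma>))"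
      using I[OF elim] elim by (intro mult_left_mono) (auto intro: order.trans[OF _ mult_right_mono[OF abs_ge_self]])
    then show ?case using True elim by (simp add: varphi_aq_def abs_mult mult_ac)
  qed
  ultimately show ?thesis by (rule Lim_null_comparison[rotated])
next
  case False
  have "((\<lambda>\<epsilon>. \<bar>K\<bar> * (\<epsilon> / \<bar>ln \<epsilon>\<bar> * (T / \<epsilon> + 1))) \<longlongrightarrow> 0) (at_right 0)"
    using assms(1) by real_asymp
  moreover have "eventually (\<lambda>\<epsilon>. norm (varphi_aq \<alpha> q \<epsilon> * I \<epsilon>)
      \<le> \<bar>K\<bar> * (\<epsilon> / \<bar>ln \<epsilon>\<bar> * (T / \<epsilon> + 1))) (at_right 0)"
    using eventually_at_right_less[of 0]
  proof eventually_elim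
    case (elim \<epsilon>)
    have "(T / \<epsilon> + 1) powr (2 - 2 * \<gamma>) \<le> (T / \<epsilon> + 1) powr 1"
      using elim assms by (intro powr_mono) auto
    then have "\<bar>I \<epsilon>\<bar> \<le> \<bar>K\<bar> * (T / \<epsilon> + 1)"
      using I[OF elim] elim assms
      by (smt (verit) abs_ge_self mult_mono powr_ge_zero powr_one_gt_zero_iff divide_pos_pos)
    then have "\<epsilon> / \<bar>ln \<epsilon>\<bar> * \<bar>I \<epsilon>\<bar> \<le> \<epsilon> / \<bar>ln \<epsilon>\<bar> * (\<bar>K\<bar> * (T / \<epsilon> + 1))"
      using elim by (intro mult_left_mono) auto
    then show ?case using False elim by (simp add: varphi_aq_def abs_mult mult_ac)
  qed
  ultimately show ?thesis by (rule Lim_null_comparison[rotated])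
qed

theorem lemma6p1:
  fixes M :: "'a measure" and X :: "real \<Rightarrow> 'a \<Rightarrow> real"
    and \<beta> \<alpha> lam c \<nu> T :: real and \<psi> :: "real \<Rightarrow> real" and q :: nat
  assumes "centered_gaussian_process M X"
    and "self_similar M X \<beta>"
    and "0 < \<beta>" and "\<beta> < 1"
    and "H1 M X \<beta> \<alpha> lam \<psi>"
    and "H2 M X \<alpha> c \<nu>"
    and "q \<ge> 1" and "\<alpha> \<le> 2 - 1 / real q"
    and "T > 0"
  shows "((\<lambda>\<epsilon>. varphi_aq \<alpha> q \<epsilon> *
            integral ({0..T/\<epsilon>} \<times> {0..T/\<epsilon>})
              (\<lambda>(s, t). indicator (D2 c) (s, t) * \<bar>Phi M X s t\<bar> ^ q))
          \<longlongrightarrow> 0) (at_right 0)"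
proof -
  interpret regular_ss_gaussian_process M X \<beta> \<alpha> lam c \<nu> \<psi>
    using assms(1-6) by unfold_locales
  let ?\<gamma> = "kernel_exp q"
  obtain K where "K \<ge> 0" and K: "\<And>s t. s \<ge> 0 \<Longrightarrow> t \<ge> 0 \<Longrightarrow>
      indicator (D2 c) (s, t) * \<bar>Phi M X s t\<bar> ^ q \<le> K * (s + 1) powr (- ?\<gamma>) * (t + 1) powr (- ?\<gamma>)"
    using Phi_pow_D2_bound by blast
  note \<gamma> = kernel_exp_bounds[OF assms(7,8)]
  show ?thesis
  proof (rule varphi_aq_mult_tendsto_0[OF assms(9) \<gamma>])
    fix \<epsilon> :: real
    assume "0 < \<epsilon>"
    then show "\<bar>integral ({0..T/\<epsilon>} \<times> {0..T/\<epsilon>}) (\<lambda>(s, t). indicator (D2 c) (s, t) * \<bar>Phi M X s t\<bar> ^ q)\<bar>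
        \<le> K / (1 - ?\<gamma>)\<^sup>2 * (T / \<epsilon> + 1) powr (2 - 2 * ?\<gamma>)"
      using \<open>K \<ge> 0\<close> \<gamma> assms(9) K by (intro box_integral_bound) auto
  qed
qed

end
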